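(* Let $\Omega\subset\mathbb{R}^n$ be a bounded domain, $1<p<\infty$, $0<s<1$, and let $r$ and $R$ be the interior and exterior diameters of $\Omega$ respectively. For ${\bf u}\in W^{s,p}(\Omega)^n$ let $\Pi_\Omega{\bf u}=\sum_{1\le i<j\le n}u_{ij}{\bf I}_{ij}$ be the (unique) linear map of this form with $\langle{\bf u}-\Pi_\Omega{\bf u},{\bf I}_{ij}\rangle=0$ for every $1\le i<j\le n$. Then there is a constant $C$ depending only on $n,p,s$ such that $$|{\bf u}-\Pi_\Omega{\bf u}|_{W^{s,p}(\Omega)^n}\le C\left(\tfrac Rr\right)^{n+2-2s}|{\bf u}-{\bf r}|_{W^{s,p}(\Omega)^n}$$ for every ${\bf u}\in W^{s,p}(\Omega)^n$ and every ${\bf r}\in RM$.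
   Context: $RM=\{{\bf r}(x)=Ax+b: A\in\mathbb{R}^{n\times n}\text{ skew-symmetric}, b\in\mathbb{R}^n\}$. $I_{ij}\in\mathbb{R}^{n\times n}$ ($i<j$) is the matrix with $(I_{ij})_{ij}=1$, $(I_{ij})_{ji}=-1$ and all other entries $0$; ${\bf I}_{ij}(x)=I_{ij}x$. $|{\bf v}|_{W^{s,p}(\Omega)^n}=\left(\int_\Omega\int_\Omega\frac{|{\bf v}(x)-{\bf v}(y)|^p}{|x-y|^{n+sp}}dy\,dx\right)^{1/p}$, and $W^{s,p}(\Omega)^n$ is the space of ${\bf v}\in L^p(\Omega)^n$ with this seminorm finite. $\langle{\bf u},{\bf v}\rangle=\int_\Omega\int_\Omega\frac{({\bf u}(x)-{\bf u}(y))\cdot({\bf v}(x)-{\bf v}(y))}{|x-y|^{n+2s}}dy\,dx$. The interior diameter $r$ is (comparable to) the diameter of the largest ball contained in $\Omega$, and the exterior diameter $R$ is (comparable to) the diameter of the smallest ball containing $\Omega$; equivalently one may take $r,R$ as radii of balls $B(w,r)\subset\Omega\subset B(z,R)$. *)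

theory Defs
  imports "HOL-Analysis.Analysis"
begin

definition gag_pow :: "real \<Rightarrow> real \<Rightarrow> (real^'n) set \<Rightarrow> (real^'n \<Rightarrow> real^'n) \<Rightarrow> ennreal" where
  "gag_pow s p \<Omega> v =
     (\<integral>\<^sup>+ x. (\<integral>\<^sup>+ y. ennreal (norm (v x - v y) powr p / norm (x - y) powr (real CARD('n) + s * p))
        \<partial>(lebesgue_on \<Omega>)) \<partial>(lebesgue_on \<Omega>))"

definition gag_semi :: "real \<Rightarrow> real \<Rightarrow> (real^'n) set \<Rightarrow> (real^'n \<Rightarrow> real^'n) \<Rightarrow> real" where
  "gag_semi s p \<Omega> v = enn2real (gag_pow s p \<Omega> v) powr (1 / p)"

definition Wsp :: "real \<Rightarrow> real \<Rightarrow> (real^'n) set \<Rightarrow> (real^'n \<Rightarrow> real^'n) set" where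
  "Wsp s p \<Omega> = {v. v \<in> borel_measurable (lebesgue_on \<Omega>)
                  \<and> integrable (lebesgue_on \<Omega>) (\<lambda>x. norm (v x) powr p)
                  \<and> gag_pow s p \<Omega> v < \<infinity>}"

definition gag_inner :: "real \<Rightarrow> (real^'n) set \<Rightarrow> (real^'n \<Rightarrow> real^'n) \<Rightarrow> (real^'n \<Rightarrow> real^'n) \<Rightarrow> real" where
  "gag_inner s \<Omega> u v =
     integral\<^sup>L (lebesgue_on \<Omega> \<Otimes>\<^sub>M lebesgue_on \<Omega>)
       (\<lambda>(x, y). ((u x - u y) \<bullet> (v x - v y)) / norm (x - y) powr (real CARD('n) + 2 * s))"

definition Imat :: "'n \<Rightarrow> 'n \<Rightarrow> real^'n^'n" where
  "Imat i j = (\<chi> a b. if a = i \<and> b = j then 1 else if a = j \<and> b = i then -1 else 0)"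

definition Ifun :: "'n \<Rightarrow> 'n \<Rightarrow> real^'n \<Rightarrow> real^'n" where
  "Ifun i j x = Imat i j *v x"

definition RM :: "(real^'n \<Rightarrow> real^'n) set" where
  "RM = {(\<lambda>x. A *v x + b) | A b. transpose A = - A}"

definition Pimap :: "('n::{finite,linorder} \<Rightarrow> 'n \<Rightarrow> real) \<Rightarrow> real^'n::{finite,linorder} \<Rightarrow> real^'n::{finite,linorder}" where
  "Pimap c x = (\<Sum>(i, j) \<in> {(i, j). i < j}. c i j *\<^sub>R Ifun i j x)"

end

theory Submission
  imports Defs
begin

text \<open>
  Put V = u - rr and W = u - Pi u. Then W - V = N x + const with N = A - Pi skew-symmetric,
  i.e. N is a combination of the I_ij, so the orthogonality conditions give <W, N> = 0 and
  hence <N, N> = - <V, N> <= |V|_{s,p} |N|_{s,q} by Hoelder, where q = p / (p - 1).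
  Let m be the largest modulus of an entry of N. Integrating over two small balls near
  antipodal points of the inscribed ball gives <N, N> >= c m^2 r^(n + 2 - 2s), while the
  Lipschitz bound |N x - N y| <= n^2 m |x - y| on the circumscribed ball gives
  |N|_{s,t} <= C m R^((n + t (1 - s)) / t). Hence m is controlled by |V|_{s,p}, and the
  quasi-triangle inequality |W| <= 4 (|V| + |N|_{s,p}) gives the claim, because the exponents
  of R for t = p and t = q add up to n + 2 - 2s.
\<close>

lemma powr_add_le:
  fixes a b :: real
  assumes "a \<ge> 0" "b \<ge> 0" "p > 0"
  shows "(a + b) powr p \<le> 2 powr p * (a powr p + b powr p)"
proof -
  have "(a + b) powr p \<le> (2 * max a b) powr p" using assms by (intro powr_mono2) auto
  also have "\<dots> = 2 powr p * (max a b) powr p" using assms by (simp add: powr_mult)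
  also have "(max a b) powr p \<le> a powr p + b powr p" using assms by (simp add: max_def)
  finally show ?thesis using assms by (simp add: mult_left_mono)
qed

lemma dyadic_shell_index:
  fixes d \<rho> :: real
  assumes "0 < d" "d < \<rho>"
  obtains k :: nat where "\<rho> * (1/2)^(Suc k) \<le> d" "d < \<rho> * (1/2)^k"
proof -
  have ex: "\<exists>k::nat. \<rho> * (1/2)^(Suc k) \<le> d"
  proof -
    obtain k :: nat where "(1/2::real)^k < d/\<rho>"
      using real_arch_pow_inv[of "d/\<rho>" "1/2"] assms by auto
    then show ?thesis using assms by (intro exI[of _ k]) (auto simp: field_simps)
  qed
  define k where "k = (LEAST k::nat. \<rho> * (1/2)^(Suc k) \<le> d)"
  have "\<rho> * (1/2)^(Suc k) \<le> d" unfolding k_def by (rule LeastI_ex[OF ex])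
  moreover have "d < \<rho> * (1/2)^k"
  proof (cases k)
    case 0 then show ?thesis using assms by simp
  next
    case (Suc j)
    then have "\<not> \<rho> * (1/2)^(Suc j) \<le> d"
      using not_less_Least[of j "\<lambda>k. \<rho> * (1/2)^(Suc k) \<le> d"] k_def by auto
    then show ?thesis using Suc by simp
  qed
  ultimately show ?thesis using that by blast
qed

lemma powr_le_on_dyadic_shell:
  fixes d \<rho> \<beta> :: real
  assumes "\<rho> * (1/2)^(Suc k) \<le> d" "d < \<rho> * (1/2)^k" "0 < d"
  shows "d powr \<beta> \<le> 2 powr \<bar>\<beta>\<bar> * \<rho> powr \<beta> * ((1/2) powr \<beta>)^k"
proof -
  have \<rho>: "\<rho> > 0" using assms by (smt (verit) mult_nonpos_nonneg zero_le_divide_1_iff zero_le_power)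
  have shell: "((1/2::real) powr \<beta>)^k = ((1/2)^k) powr \<beta>"
    by (simp add: powr_powr powr_realpow[symmetric] mult.commute flip: powr_power)
  show ?thesis
  proof (cases "\<beta> \<ge> 0")
    case True
    have "d powr \<beta> \<le> (\<rho> * (1/2)^k) powr \<beta>"
      using assms True by (intro powr_mono2) auto
    also have "\<dots> = \<rho> powr \<beta> * ((1/2)^k) powr \<beta>" using \<rho> by (simp add: powr_mult)
    also have "\<dots> \<le> 2 powr \<bar>\<beta>\<bar> * (\<rho> powr \<beta> * ((1/2)^k) powr \<beta>)"
      using mult_right_mono[of 1 "2 powr \<bar>\<beta>\<bar>" "\<rho> powr \<beta> * ((1/2)^k) powr \<beta>"]
      by (simp add: ge_one_powr_ge_zero)
    finally show ?thesis using shell by (simp add: mult.assoc)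
  next
    case False
    have "d powr \<beta> \<le> (\<rho> * (1/2)^(Suc k)) powr \<beta>"
      using assms False \<rho> by (intro powr_mono2') auto
    also have "\<dots> = \<rho> powr \<beta> * ((1/2)^k) powr \<beta> * (1/2) powr \<beta>"
      using \<rho> by (simp only: power_Suc powr_mult mult_ac mult_pos_pos zero_less_power zero_less_divide_iff)
    also have "(1/2::real) powr \<beta> = 2 powr \<bar>\<beta>\<bar>" using False
      by (simp add: powr_divide powr_minus_divide)
    finally show ?thesis using shell by (simp add: mult_ac)
  qed
qed

lemma conjugate_exponents_sum:
  fixes n p q s :: real
  assumes "p > 0" "q > 0" "1/p + 1/q = 1"
  shows "(n + p * (1 - s)) / p + (n + q * (1 - s)) / q = n + 2 - 2 * s"
proof -
  have "(n + p * (1 - s)) / p = n / p + (1 - s)" "(n + q * (1 - s)) / q = n / q + (1 - s)"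
    using assms(1,2) by (simp_all add: add_divide_distrib)
  then have "(n + p * (1 - s)) / p + (n + q * (1 - s)) / q = n * (1/p + 1/q) + 2 * (1 - s)"
    by (simp add: algebra_simps)
  then show ?thesis using assms(3) by simp
qed

lemma add_entry_term_le_powr_ratio:
  fixes K L\<^sub>p L\<^sub>q m g r R e\<^sub>p e\<^sub>q k :: real
  assumes K: "K > 0" and L\<^sub>p: "L\<^sub>p \<ge> 0" and g: "g \<ge> 0" and r: "0 < r" "r \<le> R"
    and k: "e\<^sub>p + e\<^sub>q = k" "k \<ge> 0"
    and entry: "K * m * r powr k \<le> L\<^sub>q * R powr e\<^sub>q * g"
  shows "g + L\<^sub>p * m * R powr e\<^sub>p \<le> (1 + L\<^sub>p * L\<^sub>q / K) * (R / r) powr k * g"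
proof -
  have \<rho>: "(R / r) powr k = R powr e\<^sub>p * R powr e\<^sub>q / r powr k"
    using r by (simp add: powr_divide k(1)[symmetric] powr_add)
  have \<rho>_ge: "1 \<le> (R / r) powr k" using r k by (intro ge_one_powr_ge_zero) auto
  have "L\<^sub>p * m * R powr e\<^sub>p = L\<^sub>p * R powr e\<^sub>p / (K * r powr k) * (K * m * r powr k)"
    using K r by (simp add: field_simps)
  also have "\<dots> \<le> L\<^sub>p * R powr e\<^sub>p / (K * r powr k) * (L\<^sub>q * R powr e\<^sub>q * g)"
    using K L\<^sub>p entry by (intro mult_left_mono) auto
  also have "\<dots> = L\<^sub>p * L\<^sub>q / K * (R / r) powr k * g"
    unfolding \<rho> using K r by (simp add: field_simps)
  finally have "L\<^sub>p * m * R powr e\<^sub>p \<le> L\<^sub>p * L\<^sub>q / K * (R / r) powr k * g" .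
  moreover have "g \<le> (R / r) powr k * g" using mult_right_mono[OF \<rho>_ge g] by simp
  ultimately show ?thesis by (simp add: algebra_simps)
qed

lemma nn_integral_mult_eq_0_if_powr:
  fixes f g :: "'a \<Rightarrow> real"
  assumes [measurable]: "f \<in> borel_measurable M" "g \<in> borel_measurable M"
    and p: "p > 0" and f0: "\<And>x. f x \<ge> 0" and zero: "(\<integral>\<^sup>+ x. ennreal (f x powr p) \<partial>M) = 0"
  shows "(\<integral>\<^sup>+ x. ennreal (f x * g x) \<partial>M) = 0"
proof -
  have "AE x in M. ennreal (f x powr p) = 0"
    using zero by (subst nn_integral_0_iff_AE[symmetric]) auto
  then have "AE x in M. ennreal (f x * g x) = 0"
    by eventually_elim (use f0 p in auto)
  then show ?thesis by (subst nn_integral_0_iff_AE) auto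
qed

lemma nn_integral_mult_le_Holder:
  fixes f g :: "'a \<Rightarrow> real"
  assumes p: "p > 1" and q: "q > 1" and pq: "1/p + 1/q = 1"
    and fm: "f \<in> borel_measurable M" and gm: "g \<in> borel_measurable M"
    and f0: "\<And>x. f x \<ge> 0" and g0: "\<And>x. g x \<ge> 0"
    and A: "(\<integral>\<^sup>+ x. ennreal (f x powr p) \<partial>M) = ennreal A" and A0: "A \<ge> 0"
    and B: "(\<integral>\<^sup>+ x. ennreal (g x powr q) \<partial>M) = ennreal B" and B0: "B \<ge> 0"
  shows "(\<integral>\<^sup>+ x. ennreal (f x * g x) \<partial>M) \<le> ennreal (A powr (1/p) * B powr (1/q))"
proof -
  note [measurable] = fm gm
  consider "A = 0" | "B = 0" | "A > 0" "B > 0" using A0 B0 by linarith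
  then show ?thesis
  proof cases
    case 1
    have "(\<integral>\<^sup>+ x. ennreal (f x * g x) \<partial>M) = 0"
      using A p 1 by (intro nn_integral_mult_eq_0_if_powr[OF fm gm _ f0, where p = p]) auto
    then show ?thesis by simp
  next
    case 2
    have "(\<integral>\<^sup>+ x. ennreal (g x * f x) \<partial>M) = 0"
      using B q 2 by (intro nn_integral_mult_eq_0_if_powr[OF gm fm _ g0, where p = q]) auto
    then show ?thesis by (simp add: mult.commute)
  next
    case 3
    define a where "a = A powr (1/p)"
    define b where "b = B powr (1/q)"
    have a: "a > 0" and b: "b > 0" using 3 unfolding a_def b_def by auto
    have ap: "a powr p = A" unfolding a_def using 3 p by (simp add: powr_powr)
    have bq: "b powr q = B" unfolding b_def using 3 q by (simp add: powr_powr)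
    have Young: "f x * g x \<le> (a * b / (p * A)) * f x powr p + (a * b / (q * B)) * g x powr q" for x
    proof -
      have "(f x / a) * (g x / b) \<le> (f x / a) powr p / p + (g x / b) powr q / q"
        using Youngs_inequality[OF p q pq, of "f x / a" "g x / b"] f0 g0 a b by auto
      also have "\<dots> = f x powr p / (p * A) + g x powr q / (q * B)"
        using a b f0 g0 by (simp add: powr_divide ap bq mult.commute)
      finally show ?thesis using a b by (simp add: field_simps)
    qed
    have "(\<integral>\<^sup>+ x. ennreal (f x * g x) \<partial>M)
        \<le> (\<integral>\<^sup>+ x. ennreal (a * b / (p * A)) * ennreal (f x powr p)
                 + ennreal (a * b / (q * B)) * ennreal (g x powr q) \<partial>M)"
      using Young a b p q 3
      by (intro nn_integral_mono)
         (simp add: ennreal_leI ennreal_plus[symmetric] ennreal_mult[symmetric] del: ennreal_plus)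
    also have "\<dots> = ennreal (a * b / (p * A)) * ennreal A + ennreal (a * b / (q * B)) * ennreal B"
      by (simp add: nn_integral_add nn_integral_cmult A B)
    also have "\<dots> = ennreal (a * b * (1/p + 1/q))"
      using a b p q 3
      by (simp add: field_simps ennreal_plus[symmetric] ennreal_mult[symmetric] del: ennreal_plus)
    finally show ?thesis using pq unfolding a_def b_def by simp
  qed
qed

lemma sigma_finite_lebesgue_on:
  fixes S :: "'a::euclidean_space set"
  assumes "S \<in> sets lebesgue"
  shows "sigma_finite_measure (lebesgue_on S)"
proof -
  obtain A :: "'a set set" where A: "countable A" "A \<subseteq> sets lborel" "\<Union>A = space lborel"
      "\<forall>a\<in>A. emeasure lborel a \<noteq> \<infinity>"
    using sigma_finite_measure.sigma_finite_countable[OF sigma_finite_lborel] by blast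
  have "sigma_finite_measure (lebesgue :: 'a measure)"
  proof (rule sigma_finite_measure.intro, rule exI[of _ A], intro conjI)
    show "A \<subseteq> sets lebesgue" using A(2) by auto
    show "\<forall>a\<in>A. emeasure lebesgue a \<noteq> \<infinity>" using A(2,4) by (auto simp: emeasure_completion subset_eq)
  qed (use A in auto)
  then show ?thesis by (rule sigma_finite_measure_restrict_space) (use assms in simp)
qed

lemma measurable_id_lebesgue_on: "S \<in> sets lebesgue \<Longrightarrow> (\<lambda>x. x) \<in> borel_measurable (lebesgue_on S)"
  by (rule continuous_imp_measurable_on_sets_lebesgue) (auto intro: continuous_intros)

lemma measurable_matrix_vector_mult_lebesgue_on:
  "S \<in> sets lebesgue \<Longrightarrow> (\<lambda>x. (M::real^'n^'m) *v x) \<in> borel_measurable (lebesgue_on S)"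
  by (rule continuous_imp_measurable_on_sets_lebesgue) (auto intro: matrix_vector_mult_linear_continuous_on)

lemma nn_integral_lebesgue_on_ge_rectangle:
  fixes f :: "'a::euclidean_space \<Rightarrow> 'a \<Rightarrow> ennreal"
  assumes S: "S \<in> sets lebesgue" and sub: "A \<subseteq> S" "B \<subseteq> S"
    and meas: "A \<in> sets lebesgue" "B \<in> sets lebesgue"
    and f: "\<And>x y. x \<in> A \<Longrightarrow> y \<in> B \<Longrightarrow> c \<le> f x y"
  shows "c * emeasure lebesgue A * emeasure lebesgue B
           \<le> (\<integral>\<^sup>+x. \<integral>\<^sup>+y. f x y \<partial>lebesgue_on S \<partial>lebesgue_on S)"
proof -
  have sets: "A \<in> sets (lebesgue_on S)" "B \<in> sets (lebesgue_on S)"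
    using S sub meas by (simp_all add: sets_restrict_space_iff)
  have measures: "emeasure (lebesgue_on S) A = emeasure lebesgue A"
      "emeasure (lebesgue_on S) B = emeasure lebesgue B"
    using S sub meas by (simp_all add: emeasure_restrict_space)
  have inner: "(\<integral>\<^sup>+y. c * indicator A x * indicator B y \<partial>lebesgue_on S)
      = c * emeasure lebesgue B * indicator A x" for x
    using nn_integral_cmult_indicator[OF sets(2), of "c * indicator A x"] measures(2) by (simp add: mult_ac)
  have "c * emeasure lebesgue A * emeasure lebesgue B
      = (\<integral>\<^sup>+x. \<integral>\<^sup>+y. c * indicator A x * indicator B y \<partial>lebesgue_on S \<partial>lebesgue_on S)"
    unfolding inner using nn_integral_cmult_indicator[OF sets(1), of "c * emeasure lebesgue B"] measures(1)
    by (simp add: mult_ac)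
  also have "\<dots> \<le> (\<integral>\<^sup>+x. \<integral>\<^sup>+y. f x y \<partial>lebesgue_on S \<partial>lebesgue_on S)"
    using f by (intro nn_integral_mono) (simp add: indicator_def)
  finally show ?thesis .
qed

section \<open>Singular kernels on balls\<close>

definition ball_singular_const :: "nat \<Rightarrow> real \<Rightarrow> real" where
  "ball_singular_const d \<beta> = unit_ball_vol (real d) * 2 powr \<bar>\<beta>\<bar> / (1 - (1/2) powr (real d + \<beta>))"

lemma ball_singular_const_nonneg: "real d + \<beta> > 0 \<Longrightarrow> ball_singular_const d \<beta> \<ge> 0"
  unfolding ball_singular_const_def
  by (intro divide_nonneg_pos mult_nonneg_nonneg) (auto simp: unit_ball_vol_nonneg powr01_less_one)

lemma norm_powr_indicator_ball_le_suminf: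
  fixes x y :: "'a::real_normed_vector"
  shows "ennreal (norm (x - y) powr \<beta> * indicator (ball x \<rho>) y)
           \<le> (\<Sum>k. ennreal (2 powr \<bar>\<beta>\<bar> * \<rho> powr \<beta> * ((1/2) powr \<beta>)^k) * indicator (ball x (\<rho> * (1/2)^k)) y)"
proof (cases "y \<in> ball x \<rho> \<and> y \<noteq> x")
  case True
  define a where "a = (\<lambda>k::nat. 2 powr \<bar>\<beta>\<bar> * \<rho> powr \<beta> * ((1/2) powr \<beta>)^k)"
  from True have "0 < norm (x - y)" "norm (x - y) < \<rho>" by (auto simp: dist_norm)
  then obtain k where k: "\<rho> * (1/2)^(Suc k) \<le> norm (x - y)" "norm (x - y) < \<rho> * (1/2)^k"
    by (rule dyadic_shell_index)
  have "norm (x - y) powr \<beta> \<le> a k"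
    unfolding a_def using powr_le_on_dyadic_shell[OF k] \<open>0 < norm (x - y)\<close> by blast
  then have "ennreal (norm (x - y) powr \<beta> * indicator (ball x \<rho>) y)
        \<le> ennreal (a k) * indicator (ball x (\<rho> * (1/2)^k)) y"
    using True k by (simp add: dist_norm indicator_def ennreal_leI)
  also have "\<dots> \<le> (\<Sum>k. ennreal (a k) * indicator (ball x (\<rho> * (1/2)^k)) y)"
    by (rule sum_le_suminf[where I = "{k}", simplified]) (auto simp: summableI)
  finally show ?thesis unfolding a_def .
qed (auto simp: indicator_def)

text \<open>Integrating the dyadic domination term by term gives a geometric series with
  ratio \<open>2 powr -(d + \<beta>) < 1\<close>.\<close>
lemma nn_integral_norm_powr_ball_le:
  fixes x :: "'a::euclidean_space"
  assumes \<rho>: "\<rho> > 0" and \<beta>: "real DIM('a) + \<beta> > 0"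
  shows "(\<integral>\<^sup>+ y. ennreal (norm (x - y) powr \<beta> * indicator (ball x \<rho>) y) \<partial>lborel)
          \<le> ennreal (ball_singular_const DIM('a) \<beta> * \<rho> powr (real DIM('a) + \<beta>))"
proof -
  define d where "d = DIM('a)"
  define a where "a = (\<lambda>k::nat. 2 powr \<bar>\<beta>\<bar> * \<rho> powr \<beta> * ((1/2) powr \<beta>)^k)"
  define g where "g = (1/2::real) powr (real d + \<beta>)"
  have g0: "0 \<le> g" and g1: "g < 1" unfolding g_def d_def using \<beta> by (auto simp: powr01_less_one)
  have a0: "a k \<ge> 0" for k unfolding a_def by simp
  have "(\<integral>\<^sup>+ y. ennreal (norm (x - y) powr \<beta> * indicator (ball x \<rho>) y) \<partial>lborel)
     \<le> (\<integral>\<^sup>+ y. (\<Sum>k. ennreal (a k) * indicator (ball x (\<rho> * (1/2)^k)) y) \<partial>lborel)"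
    unfolding a_def by (intro nn_integral_mono norm_powr_indicator_ball_le_suminf)
  also have "\<dots> = (\<Sum>k. \<integral>\<^sup>+ y. ennreal (a k) * indicator (ball x (\<rho> * (1/2)^k)) y \<partial>lborel)"
    by (intro nn_integral_suminf) (measurable, simp add: pred_def)
  also have "\<dots> = (\<Sum>k. ennreal (a k * (unit_ball_vol d * (\<rho> * (1/2)^k) ^ d)))"
    using \<rho> by (simp add: nn_integral_cmult_indicator emeasure_ball d_def ennreal_mult a0 unit_ball_vol_nonneg)
  also have "(\<lambda>k. a k * (unit_ball_vol d * (\<rho> * (1/2)^k) ^ d))
      = (\<lambda>k. (unit_ball_vol d * 2 powr \<bar>\<beta>\<bar> * \<rho> powr (real d + \<beta>)) * g ^ k)"
  proof
    fix k
    have "((1/2::real) powr \<beta>)^k * ((1/2)^k)^d = g ^ k"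
      unfolding g_def
      by (simp add: powr_add power_mult_distrib powr_realpow[symmetric] flip: power_mult powr_power)
         (simp add: powr_powr[symmetric] powr_realpow mult.commute power_mult flip: power_mult)
    moreover have "\<rho> ^ d = \<rho> powr real d" using \<rho> by (simp add: powr_realpow)
    ultimately show "a k * (unit_ball_vol d * (\<rho> * (1/2)^k) ^ d)
      = (unit_ball_vol d * 2 powr \<bar>\<beta>\<bar> * \<rho> powr (real d + \<beta>)) * g ^ k"
      unfolding a_def using \<rho> by (simp add: power_mult_distrib powr_add mult_ac)
  qed
  also have "(\<Sum>k. ennreal ((unit_ball_vol d * 2 powr \<bar>\<beta>\<bar> * \<rho> powr (real d + \<beta>)) * g ^ k))
      = ennreal ((unit_ball_vol d * 2 powr \<bar>\<beta>\<bar> * \<rho> powr (real d + \<beta>)) * (1 / (1 - g)))"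
    using g0 g1
    by (intro suminf_ennreal_eq sums_mult geometric_sums mult_nonneg_nonneg)
       (auto simp: unit_ball_vol_nonneg)
  also have "\<dots> = ennreal (ball_singular_const DIM('a) \<beta> * \<rho> powr (real DIM('a) + \<beta>))"
    unfolding ball_singular_const_def g_def d_def by simp
  finally show ?thesis .
qed

definition lipschitz_energy_const :: "nat \<Rightarrow> real \<Rightarrow> real \<Rightarrow> real" where
  "lipschitz_energy_const d q s =
     unit_ball_vol (real d) * ball_singular_const d (q - real d - s * q) * 2 powr (q * (1 - s))"

lemma lipschitz_energy_const_nonneg:
  "q * (1 - s) > 0 \<Longrightarrow> lipschitz_energy_const d q s \<ge> 0"
  unfolding lipschitz_energy_const_def
  by (intro mult_nonneg_nonneg ball_singular_const_nonneg) (auto simp: unit_ball_vol_nonneg algebra_simps)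

lemma nn_integral_lipschitz_kernel_le:
  fixes S :: "(real^'n) set" and L :: "real^'n \<Rightarrow> real^'n"
  assumes S: "S \<in> sets lebesgue" and sub: "S \<subseteq> ball z R" and x: "x \<in> S"
    and q: "q > 0" and s: "q * (1 - s) > 0"
    and \<mu>: "\<mu> \<ge> 0" and lip: "\<And>x y. norm (L x - L y) \<le> \<mu> * norm (x - y)"
  shows "(\<integral>\<^sup>+ y. ennreal (norm (L x - L y) powr q / norm (x - y) powr (real CARD('n) + s * q)) \<partial>lebesgue_on S)
           \<le> ennreal (\<mu> powr q * (ball_singular_const CARD('n) (q - real CARD('n) - s * q)
                                      * (2 * R) powr (q * (1 - s))))"
proof -
  define n where "n = real CARD('n)"
  define \<beta> where "\<beta> = q - n - s * q"
  have n\<beta>: "n + \<beta> = q * (1 - s)" unfolding \<beta>_def by (simp add: algebra_simps)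
  have K: "ball_singular_const CARD('n) \<beta> \<ge> 0"
    using n\<beta> s by (intro ball_singular_const_nonneg) (simp add: n_def)
  have R: "R > 0" using sub x by (metis zero_le_dist le_less_trans mem_ball subsetD)
  have kernel: "ennreal (norm (L x - L y) powr q / norm (x - y) powr (n + s * q)) * indicator S y
      \<le> ennreal (\<mu> powr q) * ennreal (norm (x - y) powr \<beta> * indicator (ball x (2 * R)) y)" for y
  proof (cases "y \<in> S \<and> y \<noteq> x")
    case True
    have "norm (L x - L y) powr q \<le> (\<mu> * norm (x - y)) powr q" using lip q by (intro powr_mono2) auto
    also have "\<dots> = \<mu> powr q * norm (x - y) powr q" using \<mu> by (simp add: powr_mult)
    finally have "norm (L x - L y) powr q / norm (x - y) powr (n + s * q) \<le> \<mu> powr q * norm (x - y) powr \<beta>"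
      using True by (simp add: \<beta>_def powr_diff diff_diff_eq divide_right_mono)
    moreover have "y \<in> ball x (2 * R)" using True sub x
      by (smt (verit, ccfv_threshold) dist_commute dist_triangle mem_ball subsetD)
    ultimately show ?thesis using True by (simp add: ennreal_mult[symmetric] ennreal_leI)
  qed (auto simp: indicator_def)
  have "(\<integral>\<^sup>+ y. ennreal (norm (L x - L y) powr q / norm (x - y) powr (n + s * q)) \<partial>lebesgue_on S)
      = (\<integral>\<^sup>+ y. ennreal (norm (L x - L y) powr q / norm (x - y) powr (n + s * q)) * indicator S y \<partial>lebesgue)"
    using S by (simp add: nn_integral_restrict_space)
  also have "\<dots> \<le> (\<integral>\<^sup>+ y. ennreal (\<mu> powr q) * ennreal (norm (x - y) powr \<beta> * indicator (ball x (2 * R)) y) \<partial>lebesgue)"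
    by (intro nn_integral_mono kernel)
  also have "\<dots> = ennreal (\<mu> powr q) * (\<integral>\<^sup>+ y. ennreal (norm (x - y) powr \<beta> * indicator (ball x (2 * R)) y) \<partial>lborel)"
    by (simp only: nn_integral_completion, rule nn_integral_cmult) (measurable, simp add: pred_def)
  also have "\<dots> \<le> ennreal (\<mu> powr q) * ennreal (ball_singular_const CARD('n) \<beta> * (2 * R) powr (n + \<beta>))"
    using nn_integral_norm_powr_ball_le[of "2 * R" \<beta> x] R n\<beta> s unfolding n_def
    by (intro mult_left_mono) auto
  also have "\<dots> = ennreal (\<mu> powr q * (ball_singular_const CARD('n) \<beta> * (2 * R) powr (q * (1 - s))))"
    using K n\<beta> by (simp add: ennreal_mult[symmetric])
  finally show ?thesis unfolding n_def \<beta>_def .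
qed

lemma gag_pow_lipschitz_le:
  fixes \<Omega> :: "(real^'n) set" and L :: "real^'n \<Rightarrow> real^'n"
  assumes \<Omega>: "\<Omega> \<in> sets lebesgue" and sub: "\<Omega> \<subseteq> ball z R"
    and q: "q > 0" and s: "q * (1 - s) > 0"
    and \<mu>: "\<mu> \<ge> 0" and lip: "\<And>x y. norm (L x - L y) \<le> \<mu> * norm (x - y)"
  shows "gag_pow s q \<Omega> L
           \<le> ennreal (lipschitz_energy_const CARD('n) q s * \<mu> powr q * R powr (real CARD('n) + q * (1 - s)))"
proof (cases "R > 0")
  case False
  then have "\<Omega> = {}" using sub by (metis ball_eq_empty not_less subset_empty)
  then show ?thesis by (simp add: gag_pow_def nn_integral_empty space_lebesgue_on)
next
  case R: True
  define n where "n = real CARD('n)"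
  define c where "c = \<mu> powr q * (ball_singular_const CARD('n) (q - n - s * q) * (2 * R) powr (q * (1 - s)))"
  have c: "c \<ge> 0" unfolding c_def using s by (simp add: ball_singular_const_nonneg algebra_simps n_def)
  have "gag_pow s q \<Omega> L \<le> (\<integral>\<^sup>+ x. ennreal c \<partial>lebesgue_on \<Omega>)"
    unfolding gag_pow_def c_def n_def
    by (intro nn_integral_mono nn_integral_lipschitz_kernel_le[OF \<Omega> sub _ q s \<mu> lip])
       (simp add: space_lebesgue_on)
  also have "\<dots> = ennreal c * emeasure lebesgue \<Omega>"
    using \<Omega> by (simp add: nn_integral_const space_lebesgue_on emeasure_restrict_space)
  also have "\<dots> \<le> ennreal c * emeasure lebesgue (ball z R)"
    using sub by (intro mult_left_mono emeasure_mono) auto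
  also have "emeasure lebesgue (ball z R) = ennreal (unit_ball_vol n * R ^ CARD('n))"
    using R by (simp add: emeasure_completion emeasure_ball n_def)
  also have "ennreal c * \<dots> = ennreal (c * (unit_ball_vol n * R ^ CARD('n)))"
    using c R by (intro ennreal_mult[symmetric]) (auto simp: n_def)
  also have "c * (unit_ball_vol n * R ^ CARD('n))
      = lipschitz_energy_const CARD('n) q s * \<mu> powr q * R powr (n + q * (1 - s))"
    unfolding c_def lipschitz_energy_const_def n_def using R
    by (simp add: powr_mult powr_add powr_realpow mult_ac)
  finally show ?thesis unfolding n_def .
qed

section \<open>The Gagliardo energy and its bilinear form\<close>

lemma gag_pow_eq_nn_integral_pair:
  fixes F :: "real^'n \<Rightarrow> real^'n"
  assumes S: "S \<in> sets lebesgue" and [measurable]: "F \<in> borel_measurable (lebesgue_on S)"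
  shows "gag_pow s p S F = (\<integral>\<^sup>+z. ennreal (norm (F (fst z) - F (snd z)) powr p
            / norm (fst z - snd z) powr (real CARD('n) + s * p)) \<partial>(lebesgue_on S \<Otimes>\<^sub>M lebesgue_on S))"
proof -
  note [measurable] = measurable_id_lebesgue_on[OF S]
  have "(\<lambda>z. ennreal (norm (F (fst z) - F (snd z)) powr p / norm (fst z - snd z) powr (real CARD('n) + s * p)))
      \<in> borel_measurable (lebesgue_on S \<Otimes>\<^sub>M lebesgue_on S)"
    by measurable
  from sigma_finite_measure.nn_integral_fst[OF sigma_finite_lebesgue_on[OF S] this]
  show ?thesis unfolding gag_pow_def by simp
qed

lemma gag_pow_cong:
  assumes "\<And>x y. x \<in> S \<Longrightarrow> y \<in> S \<Longrightarrow> F x - F y = G x - G y"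
  shows "gag_pow s p S F = gag_pow s p S G"
  unfolding gag_pow_def by (intro nn_integral_cong) (simp add: space_lebesgue_on assms)

lemma gag_pow_add_le:
  fixes F G :: "real^'n \<Rightarrow> real^'n"
  assumes S: "S \<in> sets lebesgue" and [measurable]: "F \<in> borel_measurable (lebesgue_on S)"
    "G \<in> borel_measurable (lebesgue_on S)" and p: "p > 0"
  shows "gag_pow s p S (\<lambda>x. F x + G x) \<le> ennreal (2 powr p) * (gag_pow s p S F + gag_pow s p S G)"
proof -
  note [measurable] = measurable_id_lebesgue_on[OF S]
  define P where "P = lebesgue_on S \<Otimes>\<^sub>M lebesgue_on S"
  define k where "k = (\<lambda>z::(real^'n) \<times> (real^'n). norm (fst z - snd z) powr (real CARD('n) + s * p))"
  define energy where "energy = (\<lambda>(H :: real^'n \<Rightarrow> real^'n) z. ennreal (norm (H (fst z) - H (snd z)) powr p / k z))"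
  have pointwise: "energy (\<lambda>x. F x + G x) z \<le> ennreal (2 powr p) * (energy F z + energy G z)" for z
  proof -
    define a where "a = F (fst z) - F (snd z)"
    define b where "b = G (fst z) - G (snd z)"
    have "norm (a + b) powr p \<le> (norm a + norm b) powr p"
      using p by (intro powr_mono2) (auto simp: norm_triangle_ineq)
    also have "\<dots> \<le> 2 powr p * (norm a powr p + norm b powr p)" using p by (intro powr_add_le) auto
    finally have "norm (a + b) powr p / k z \<le> 2 powr p * (norm a powr p / k z + norm b powr p / k z)"
      by (simp add: k_def divide_right_mono add_divide_distrib[symmetric])
    then have "ennreal (norm (a + b) powr p / k z)
        \<le> ennreal (2 powr p * (norm a powr p / k z + norm b powr p / k z))"
      by (rule ennreal_leI)
    also have "\<dots> = ennreal (2 powr p) * (ennreal (norm a powr p / k z) + ennreal (norm b powr p / k z))"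
      by (simp add: k_def ennreal_mult)
    finally show ?thesis unfolding energy_def a_def b_def by (simp add: algebra_simps)
  qed
  have "gag_pow s p S (\<lambda>x. F x + G x) = (\<integral>\<^sup>+z. energy (\<lambda>x. F x + G x) z \<partial>P)"
    unfolding energy_def k_def P_def by (rule gag_pow_eq_nn_integral_pair[OF S]) measurable
  also have "\<dots> \<le> (\<integral>\<^sup>+z. ennreal (2 powr p) * (energy F z + energy G z) \<partial>P)"
    by (intro nn_integral_mono pointwise)
  also have "\<dots> = ennreal (2 powr p) * ((\<integral>\<^sup>+z. energy F z \<partial>P) + (\<integral>\<^sup>+z. energy G z \<partial>P))"
    unfolding energy_def k_def P_def by (simp add: nn_integral_cmult nn_integral_add)
  also have "\<dots> = ennreal (2 powr p) * (gag_pow s p S F + gag_pow s p S G)"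
    unfolding energy_def k_def P_def by (simp add: gag_pow_eq_nn_integral_pair[OF S])
  finally show ?thesis .
qed

lemma gag_semi_add_le:
  fixes F G :: "real^'n \<Rightarrow> real^'n"
  assumes S: "S \<in> sets lebesgue" and [measurable]: "F \<in> borel_measurable (lebesgue_on S)"
    "G \<in> borel_measurable (lebesgue_on S)" and p: "p \<ge> 1"
    and F: "gag_pow s p S F < \<infinity>" and G: "gag_pow s p S G < \<infinity>"
  shows "gag_semi s p S (\<lambda>x. F x + G x) \<le> 4 * (gag_semi s p S F + gag_semi s p S G)"
proof -
  define A where "A = enn2real (gag_pow s p S F)"
  define B where "B = enn2real (gag_pow s p S G)"
  define Y where "Y = enn2real (gag_pow s p S (\<lambda>x. F x + G x))"
  have A: "A \<ge> 0" and B: "B \<ge> 0" unfolding A_def B_def by auto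
  have "gag_pow s p S (\<lambda>x. F x + G x) \<le> ennreal (2 powr p) * (ennreal A + ennreal B)"
    using gag_pow_add_le[OF assms(1-3)] p F G unfolding A_def B_def
    by (simp add: ennreal_enn2real less_top)
  also have "\<dots> = ennreal (2 powr p * (A + B))" using A B by (simp add: ennreal_mult)
  finally have "gag_pow s p S (\<lambda>x. F x + G x) \<le> ennreal (2 powr p * (A + B))" .
  then have "Y \<le> 2 powr p * (A + B)" unfolding Y_def using A B by (simp add: enn2real_leI)
  then have "Y powr (1/p) \<le> (2 powr p * (A + B)) powr (1/p)"
    using p by (intro powr_mono2) (auto simp: Y_def)
  also have "\<dots> = 2 * (A + B) powr (1/p)" using p A B by (simp add: powr_mult powr_powr)
  also have "\<dots> \<le> 2 * (2 powr (1/p) * (A powr (1/p) + B powr (1/p)))"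
    using p A B by (intro mult_left_mono powr_add_le) auto
  also have "\<dots> \<le> 2 * (2 * (A powr (1/p) + B powr (1/p)))"
  proof -
    have "2 powr (1/p) \<le> (2::real) powr 1" using p by (intro powr_mono) auto
    then show ?thesis by (intro mult_left_mono mult_right_mono) auto
  qed
  finally show ?thesis
    unfolding gag_semi_def A_def[symmetric] B_def[symmetric] Y_def[symmetric] by simp
qed

definition gag_integrand ::
    "real \<Rightarrow> (real^'n \<Rightarrow> real^'n) \<Rightarrow> (real^'n \<Rightarrow> real^'n) \<Rightarrow> (real^'n) \<times> (real^'n) \<Rightarrow> real" where
  "gag_integrand s F G =
     (\<lambda>(x, y). ((F x - F y) \<bullet> (G x - G y)) / norm (x - y) powr (real CARD('n) + 2 * s))"

lemma gag_inner_eq_integral: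
  "gag_inner s S F G = integral\<^sup>L (lebesgue_on S \<Otimes>\<^sub>M lebesgue_on S) (gag_integrand s F G)"
  unfolding gag_inner_def gag_integrand_def ..

lemma measurable_gag_integrand:
  fixes F G :: "real^'n \<Rightarrow> real^'n"
  assumes S: "S \<in> sets lebesgue" and [measurable]: "F \<in> borel_measurable (lebesgue_on S)"
    "G \<in> borel_measurable (lebesgue_on S)"
  shows "gag_integrand s F G \<in> borel_measurable (lebesgue_on S \<Otimes>\<^sub>M lebesgue_on S)"
  using measurable_id_lebesgue_on[OF S] unfolding gag_integrand_def case_prod_unfold by measurable

lemma gag_inner_cong:
  assumes "\<And>x y. x \<in> S \<Longrightarrow> y \<in> S \<Longrightarrow> F x - F y = F' x - F' y"
    and "\<And>x y. x \<in> S \<Longrightarrow> y \<in> S \<Longrightarrow> G x - G y = G' x - G' y"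
  shows "gag_inner s S F G = gag_inner s S F' G'"
  unfolding gag_inner_eq_integral
  by (intro Bochner_Integration.integral_cong)
     (auto simp: gag_integrand_def space_pair_measure space_lebesgue_on assms)

lemma abs_gag_integrand_le:
  fixes F G :: "real^'n \<Rightarrow> real^'n"
  assumes p: "p > 0" and q: "q > 0" and pq: "1/p + 1/q = 1"
  shows "\<bar>gag_integrand s F G (x, y)\<bar>
           \<le> norm (F x - F y) / norm (x - y) powr ((real CARD('n) + s * p) / p)
               * (norm (G x - G y) / norm (x - y) powr ((real CARD('n) + s * q) / q))"
proof (cases "x = y")
  case False
  define n where "n = real CARD('n)"
  define d where "d = norm (x - y)"
  have d: "d > 0" using False unfolding d_def by simp
  have "(n + s * p) / p + (n + s * q) / q = n * (1/p + 1/q) + 2 * s" using p q by (simp add: field_simps)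
  then have exponents: "(n + s * p) / p + (n + s * q) / q = n + 2 * s" using pq by simp
  have "\<bar>gag_integrand s F G (x, y)\<bar> = \<bar>(F x - F y) \<bullet> (G x - G y)\<bar> / d powr (n + 2 * s)"
    unfolding gag_integrand_def d_def n_def by simp
  also have "\<dots> \<le> norm (F x - F y) * norm (G x - G y) / d powr (n + 2 * s)"
    by (intro divide_right_mono Cauchy_Schwarz_ineq2) simp
  also have "d powr (n + 2 * s) = d powr ((n + s * p) / p) * d powr ((n + s * q) / q)"
    unfolding exponents[symmetric] using d by (simp add: powr_add)
  finally show ?thesis unfolding d_def n_def by simp
qed (simp add: gag_integrand_def)

lemma nn_integral_abs_gag_integrand_le:
  fixes F G :: "real^'n \<Rightarrow> real^'n"
  assumes S: "S \<in> sets lebesgue" and [measurable]: "F \<in> borel_measurable (lebesgue_on S)"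
    "G \<in> borel_measurable (lebesgue_on S)"
    and p: "p > 1" and q: "q > 1" and pq: "1/p + 1/q = 1"
    and F: "gag_pow s p S F < \<infinity>" and G: "gag_pow s q S G < \<infinity>"
  shows "(\<integral>\<^sup>+z. ennreal \<bar>gag_integrand s F G z\<bar> \<partial>(lebesgue_on S \<Otimes>\<^sub>M lebesgue_on S))
           \<le> ennreal (gag_semi s p S F * gag_semi s q S G)"
proof -
  note [measurable] = measurable_id_lebesgue_on[OF S]
  define n where "n = real CARD('n)"
  define P where "P = lebesgue_on S \<Otimes>\<^sub>M lebesgue_on S"
  define f where "f = (\<lambda>z. norm (F (fst z) - F (snd z)) / norm (fst z - snd z) powr ((n + s * p) / p))"
  define g where "g = (\<lambda>z. norm (G (fst z) - G (snd z)) / norm (fst z - snd z) powr ((n + s * q) / q))"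
  have f_powr: "f z powr p = norm (F (fst z) - F (snd z)) powr p / norm (fst z - snd z) powr (n + s * p)" for z
    unfolding f_def using p by (cases "fst z = snd z") (simp_all add: powr_divide powr_powr)
  have g_powr: "g z powr q = norm (G (fst z) - G (snd z)) powr q / norm (fst z - snd z) powr (n + s * q)" for z
    unfolding g_def using q by (cases "fst z = snd z") (simp_all add: powr_divide powr_powr)
  have "(\<integral>\<^sup>+z. ennreal (f z powr p) \<partial>P) = gag_pow s p S F"
    unfolding f_powr P_def n_def by (rule gag_pow_eq_nn_integral_pair[OF S, symmetric]) measurable
  also have "\<dots> = ennreal (enn2real (gag_pow s p S F))" using F by (simp add: ennreal_enn2real less_top)
  moreover have "(\<integral>\<^sup>+z. ennreal (g z powr q) \<partial>P) = gag_pow s q S G"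
    unfolding g_powr P_def n_def by (rule gag_pow_eq_nn_integral_pair[OF S, symmetric]) measurable
  moreover have "\<dots> = ennreal (enn2real (gag_pow s q S G))" using G by (simp add: ennreal_enn2real less_top)
  ultimately have Holder: "(\<integral>\<^sup>+z. ennreal (f z * g z) \<partial>P) \<le> ennreal (gag_semi s p S F * gag_semi s q S G)"
    unfolding gag_semi_def
    by (intro nn_integral_mult_le_Holder[OF p q pq]) (auto simp: f_def g_def P_def)
  have "\<bar>gag_integrand s F G z\<bar> \<le> f z * g z" for z
    using abs_gag_integrand_le[of p q s F G "fst z" "snd z"] p q pq by (simp add: f_def g_def n_def)
  then have "(\<integral>\<^sup>+z. ennreal \<bar>gag_integrand s F G z\<bar> \<partial>P) \<le> (\<integral>\<^sup>+z. ennreal (f z * g z) \<partial>P)"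
    by (intro nn_integral_mono ennreal_leI)
  then show ?thesis using Holder unfolding P_def by (rule order_trans)
qed

lemma integrable_gag_integrand:
  fixes F G :: "real^'n \<Rightarrow> real^'n"
  assumes S: "S \<in> sets lebesgue" and "F \<in> borel_measurable (lebesgue_on S)"
    "G \<in> borel_measurable (lebesgue_on S)"
    and "p > 1" "q > 1" "1/p + 1/q = 1" "gag_pow s p S F < \<infinity>" "gag_pow s q S G < \<infinity>"
  shows "integrable (lebesgue_on S \<Otimes>\<^sub>M lebesgue_on S) (gag_integrand s F G)"
  using nn_integral_abs_gag_integrand_le[OF assms]
  by (intro integrableI_bounded measurable_gag_integrand[OF assms(1-3)])
     (auto simp: top_unique ennreal_less_top intro: le_less_trans)

lemma abs_gag_inner_le:
  fixes F G :: "real^'n \<Rightarrow> real^'n"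
  assumes S: "S \<in> sets lebesgue" and "F \<in> borel_measurable (lebesgue_on S)"
    "G \<in> borel_measurable (lebesgue_on S)"
    and "p > 1" "q > 1" "1/p + 1/q = 1" "gag_pow s p S F < \<infinity>" "gag_pow s q S G < \<infinity>"
  shows "\<bar>gag_inner s S F G\<bar> \<le> gag_semi s p S F * gag_semi s q S G"
proof -
  define P where "P = lebesgue_on S \<Otimes>\<^sub>M lebesgue_on S"
  have int: "integrable P (gag_integrand s F G)"
    unfolding P_def by (rule integrable_gag_integrand[OF assms])
  have "\<bar>gag_inner s S F G\<bar> \<le> integral\<^sup>L P (\<lambda>z. \<bar>gag_integrand s F G z\<bar>)"
    unfolding gag_inner_eq_integral P_def[symmetric] using integral_norm_bound[of P] by simp
  moreover have "ennreal (integral\<^sup>L P (\<lambda>z. \<bar>gag_integrand s F G z\<bar>))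
      = (\<integral>\<^sup>+z. ennreal \<bar>gag_integrand s F G z\<bar> \<partial>P)"
    using int by (intro nn_integral_eq_integral[symmetric]) auto
  moreover have "(\<integral>\<^sup>+z. ennreal \<bar>gag_integrand s F G z\<bar> \<partial>P)
      \<le> ennreal (gag_semi s p S F * gag_semi s q S G)"
    unfolding P_def by (rule nn_integral_abs_gag_integrand_le[OF assms])
  moreover have "gag_semi s p S F * gag_semi s q S G \<ge> 0" by (simp add: gag_semi_def)
  ultimately show ?thesis by (metis ennreal_le_iff order_trans)
qed

lemma gag_inner_add_left:
  fixes F G H :: "real^'n \<Rightarrow> real^'n"
  assumes S: "S \<in> sets lebesgue" and [measurable]: "F \<in> borel_measurable (lebesgue_on S)"
    "G \<in> borel_measurable (lebesgue_on S)" "H \<in> borel_measurable (lebesgue_on S)"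
    and p: "p > 1" "q > 1" "1/p + 1/q = 1"
    and fin: "gag_pow s p S F < \<infinity>" "gag_pow s p S G < \<infinity>" "gag_pow s q S H < \<infinity>"
  shows "gag_inner s S (\<lambda>x. F x + G x) H = gag_inner s S F H + gag_inner s S G H"
proof -
  have "gag_integrand s (\<lambda>x. F x + G x) H z = gag_integrand s F H z + gag_integrand s G H z" for z
  proof -
    have "(F (fst z) + G (fst z)) - (F (snd z) + G (snd z)) = (F (fst z) - F (snd z)) + (G (fst z) - G (snd z))"
      by simp
    then show ?thesis by (simp only: gag_integrand_def case_prod_unfold inner_add_left add_divide_distrib)
  qed
  then have "gag_integrand s (\<lambda>x. F x + G x) H = (\<lambda>z. gag_integrand s F H z + gag_integrand s G H z)" ..
  then show ?thesis
    unfolding gag_inner_eq_integral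
    by (simp add: Bochner_Integration.integral_add integrable_gag_integrand[OF S _ _ p fin(1,3)]
        integrable_gag_integrand[OF S _ _ p fin(2,3)])
qed

lemma gag_inner_self:
  fixes F :: "real^'n \<Rightarrow> real^'n"
  assumes S: "S \<in> sets lebesgue" and [measurable]: "F \<in> borel_measurable (lebesgue_on S)"
  shows "gag_inner s S F F = enn2real (gag_pow s 2 S F)"
proof -
  note [measurable] = measurable_id_lebesgue_on[OF S]
  have eq: "gag_integrand s F F
      = (\<lambda>z. norm (F (fst z) - F (snd z)) powr 2 / norm (fst z - snd z) powr (real CARD('n) + s * 2))"
    by (simp add: fun_eq_iff gag_integrand_def power2_norm_eq_inner mult.commute)
  have "gag_inner s S F F = enn2real (\<integral>\<^sup>+z. ennreal (norm (F (fst z) - F (snd z)) powr 2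
      / norm (fst z - snd z) powr (real CARD('n) + s * 2)) \<partial>(lebesgue_on S \<Otimes>\<^sub>M lebesgue_on S))"
    using measurable_gag_integrand[OF S assms(2) assms(2), of s] unfolding gag_inner_eq_integral eq
    by (intro integral_eq_nn_integral) auto
  then show ?thesis by (simp add: gag_pow_eq_nn_integral_pair[OF S])
qed

lemma sum_matrix_vector_mult:
  fixes M :: "'k \<Rightarrow> real^'n^'m"
  assumes "finite K"
  shows "(\<Sum>k\<in>K. M k) *v x = (\<Sum>k\<in>K. M k *v x)"
  using assms by (induction K rule: finite_induct) (simp_all add: matrix_vector_mult_add_rdistrib)

lemma transpose_diff: "transpose (A - B) = transpose A - transpose (B :: 'a::ab_group_add^'n^'m)"
  by (simp add: vec_eq_iff transpose_def)

lemma uminus_matrix_vector_mult: "(- A) *v x = - (A *v (x :: 'a::comm_ring_1^'n))"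
  by (simp add: vec_eq_iff matrix_vector_mult_def sum_negf)

definition Pimat ::
    "('n::{finite,linorder} \<Rightarrow> 'n::{finite,linorder} \<Rightarrow> real) \<Rightarrow> real^'n::{finite,linorder}^'n::{finite,linorder}" where
  "Pimat c = (\<Sum>(i, j) \<in> {(i, j). i < j}. c i j *\<^sub>R Imat i j)"

lemma Pimat_entry:
  "Pimat c $ a $ b = (if a < b then c a b else if b < a then - c b a else 0)"
proof -
  define S where "S = {(i, j). (i::'a::{finite,linorder}) < j}"
  have "Pimat c $ a $ b = (\<Sum>z\<in>S. (case z of (i, j) \<Rightarrow> c i j *\<^sub>R Imat i j) $ a $ b)"
    unfolding Pimat_def S_def by (simp only: sum_component)
  also have "\<dots> = (\<Sum>z\<in>S. (if z = (a, b) then c a b else 0) + (if z = (b, a) then - c b a else 0))"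
  proof (intro sum.cong refl)
    fix z assume "z \<in> S"
    then obtain i j where ij: "z = (i, j)" "i < j" unfolding S_def by auto
    then show "(case z of (i, j) \<Rightarrow> c i j *\<^sub>R Imat i j) $ a $ b
        = (if z = (a, b) then c a b else 0) + (if z = (b, a) then - c b a else 0)"
      unfolding Imat_def by (cases "i = a"; cases "j = b"; cases "i = b"; cases "j = a") auto
  qed
  also have "\<dots> = (if a < b then c a b else if b < a then - c b a else 0)"
    by (simp only: sum.distrib sum.delta' finite_subset[OF subset_UNIV] finite) (auto simp: S_def)
  finally show ?thesis .
qed

lemma Pimap_eq_Pimat: "Pimap c x = Pimat c *v x"
proof -
  have "Pimat c *v x = (\<Sum>z\<in>{(i, j). i < j}. (case z of (i, j) \<Rightarrow> c i j *\<^sub>R Imat i j) *v x)"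
    unfolding Pimat_def by (rule sum_matrix_vector_mult) simp
  also have "\<dots> = Pimap c x"
    unfolding Pimap_def Ifun_def by (intro sum.cong) (auto simp: scaleR_matrix_vector_assoc)
  finally show ?thesis ..
qed

lemma transpose_Pimat: "transpose (Pimat c) = - Pimat c"
  by (auto simp: vec_eq_iff transpose_def Pimat_entry)

lemma skew_eq_Pimat:
  fixes N :: "real^'n::{finite,linorder}^'n::{finite,linorder}"
  assumes "transpose N = - N"
  shows "N = Pimat (\<lambda>i j. N$i$j)"
proof -
  have skew: "N$b$a = - N$a$b" for a b
    using arg_cong[OF assms, of "\<lambda>M. M$a$b"] by (simp add: transpose_def)
  have diag: "N$a$a = 0" for a using skew[of a a] by simp
  have "N$a$b = Pimat (\<lambda>i j. N$i$j) $ a $ b" for a b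
  proof (cases a b rule: linorder_cases)
    case greater
    then show ?thesis using skew[of b a] by (simp add: Pimat_entry)
  qed (simp_all add: Pimat_entry diag)
  then show ?thesis unfolding vec_eq_iff by blast
qed

lemma ex_max_abs_entry:
  fixes M :: "real^'n^'m"
  obtains a b where "\<And>a' b'. \<bar>M$a'$b'\<bar> \<le> \<bar>M$a$b\<bar>"
proof -
  obtain ab where "is_arg_min (\<lambda>ab. - \<bar>M$fst ab$snd ab\<bar>) (\<lambda>ab. ab \<in> UNIV) ab"
    using ex_is_arg_min_if_finite[of UNIV "\<lambda>ab. - \<bar>M$fst ab$snd ab\<bar>"] by auto
  then have "\<bar>M$a'$b'\<bar> \<le> \<bar>M$fst ab$snd ab\<bar>" for a' b'
    unfolding is_arg_min_def by (metis UNIV_I fst_conv snd_conv neg_less_iff_less not_le)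
  then show ?thesis using that by blast
qed

lemma norm_matrix_vector_le_max_entry:
  fixes M :: "real^'n^'n"
  assumes "\<And>a b. \<bar>M$a$b\<bar> \<le> m"
  shows "norm (M *v z) \<le> real CARD('n)^2 * m * norm z"
proof -
  have "norm (M *v z) \<le> (\<Sum>a\<in>UNIV. \<bar>(M *v z)$a\<bar>)" by (rule norm_le_l1_cart)
  also have "\<dots> \<le> (\<Sum>a\<in>(UNIV::'n set). \<Sum>b\<in>(UNIV::'n set). m * norm z)"
  proof (intro sum_mono)
    fix a
    have "\<bar>(M *v z)$a\<bar> \<le> (\<Sum>b\<in>UNIV. \<bar>M$a$b * z$b\<bar>)"
      unfolding matrix_vector_mult_def by (simp add: sum_abs)
    also have "\<dots> \<le> (\<Sum>b\<in>(UNIV::'n set). m * norm z)"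
    proof (intro sum_mono)
      fix b
      have "\<bar>M$a$b\<bar> \<le> m" "\<bar>z$b\<bar> \<le> norm z" by (rule assms, rule component_le_norm_cart)
      then show "\<bar>M$a$b * z$b\<bar> \<le> m * norm z" unfolding abs_mult by (intro mult_mono) auto
    qed
    finally show "\<bar>(M *v z)$a\<bar> \<le> (\<Sum>b\<in>(UNIV::'n set). m * norm z)" .
  qed
  also have "\<dots> = real CARD('n)^2 * m * norm z" by (simp add: power2_eq_square)
  finally show ?thesis .
qed

lemma norm_matrix_vector_ge_max_entry:
  fixes M :: "real^'n^'n" and \<epsilon> :: "real^'n"
  assumes max: "\<And>a' b'. \<bar>M$a'$b'\<bar> \<le> \<bar>M$a$b\<bar>"
    and r: "r \<ge> 0" and \<epsilon>: "norm \<epsilon> \<le> r / (2 * CARD('n))"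
  shows "\<bar>M$a$b\<bar> * r / 2 \<le> norm (M *v (r *\<^sub>R axis b 1 + \<epsilon>))"
proof -
  define n where "n = real CARD('n)"
  define m where "m = \<bar>M$a$b\<bar>"
  have n: "n \<ge> 1" unfolding n_def by (simp add: Suc_leI)
  have main_term: "(M *v (r *\<^sub>R axis b 1))$a = r * M$a$b"
    by (simp add: matrix_vector_mult_def axis_def if_distrib cong: if_cong)
  have "\<bar>(M *v \<epsilon>)$a\<bar> \<le> (\<Sum>b'\<in>UNIV. \<bar>M$a$b'\<bar> * \<bar>\<epsilon>$b'\<bar>)"
    using sum_abs[of "\<lambda>b'. M$a$b' * \<epsilon>$b'" UNIV] by (simp add: matrix_vector_mult_def abs_mult)
  also have "\<dots> \<le> (\<Sum>b'\<in>(UNIV::'n set). m * norm \<epsilon>)"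
    unfolding m_def by (intro sum_mono mult_mono max component_le_norm_cart) auto
  also have "\<dots> = n * m * norm \<epsilon>" by (simp add: n_def)
  also have "\<dots> \<le> n * m * (r / (2 * n))"
    using \<epsilon> by (intro mult_left_mono) (auto simp: m_def n_def)
  also have "\<dots> = m * r / 2" using n by (simp add: field_simps)
  finally have error_term: "\<bar>(M *v \<epsilon>)$a\<bar> \<le> m * r / 2" .
  have "\<bar>r * M$a$b\<bar> = r * m" using r by (simp add: abs_mult m_def)
  then have "m * r / 2 \<le> \<bar>(M *v (r *\<^sub>R axis b 1 + \<epsilon>))$a\<bar>"
    using main_term error_term by (simp add: matrix_vector_right_distrib) argo
  also have "\<dots> \<le> norm (M *v (r *\<^sub>R axis b 1 + \<epsilon>))" by (rule component_le_norm_cart)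
  finally show ?thesis unfolding m_def .
qed

section \<open>Energy of linear maps\<close>

lemma gag_pow_matrix_le:
  fixes S :: "(real^'n) set" and M :: "real^'n^'n"
  assumes "S \<in> sets lebesgue" "S \<subseteq> ball z R" "t > 0" "t * (1 - s) > 0"
    and entries: "\<And>a b. \<bar>M$a$b\<bar> \<le> m"
  shows "gag_pow s t S (\<lambda>x. M *v x)
           \<le> ennreal (lipschitz_energy_const CARD('n) t s * (real CARD('n)^2 * m) powr t
                       * R powr (real CARD('n) + t * (1 - s)))"
proof (rule gag_pow_lipschitz_le[OF assms(1-4)])
  show "real CARD('n)^2 * m \<ge> 0" using entries[of undefined undefined] by simp
  show "norm (M *v x - M *v y) \<le> real CARD('n)^2 * m * norm (x - y)" for x y
    using norm_matrix_vector_le_max_entry[OF entries, of "x - y"]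
    by (simp add: matrix_vector_mult_diff_distrib)
qed

lemma gag_semi_matrix_le:
  fixes S :: "(real^'n) set" and M :: "real^'n^'n"
  assumes "S \<in> sets lebesgue" "S \<subseteq> ball z R" "R > 0" "t > 0" "t * (1 - s) > 0"
    and entries: "\<And>a b. \<bar>M$a$b\<bar> \<le> m"
  shows "gag_semi s t S (\<lambda>x. M *v x)
           \<le> lipschitz_energy_const CARD('n) t s powr (1/t) * (real CARD('n)^2 * m)
               * R powr ((real CARD('n) + t * (1 - s)) / t)"
proof -
  define K where "K = lipschitz_energy_const CARD('n) t s"
  define L where "L = real CARD('n)^2 * m"
  define e where "e = real CARD('n) + t * (1 - s)"
  have K: "K \<ge> 0" unfolding K_def using assms by (intro lipschitz_energy_const_nonneg)
  have L: "L \<ge> 0" unfolding L_def using entries[of undefined undefined] by simp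
  have "gag_pow s t S (\<lambda>x. M *v x) \<le> ennreal (K * L powr t * R powr e)"
    unfolding K_def L_def e_def by (rule gag_pow_matrix_le[OF assms(1,2,4-6)])
  then have "enn2real (gag_pow s t S (\<lambda>x. M *v x)) \<le> K * L powr t * R powr e"
    by (rule enn2real_leI[rotated]) (use K in simp)
  then have "gag_semi s t S (\<lambda>x. M *v x) \<le> (K * L powr t * R powr e) powr (1/t)"
    unfolding gag_semi_def by (rule powr_mono2[rotated 2]) (use assms(4) in auto)
  also have "\<dots> = K powr (1/t) * (L powr t) powr (1/t) * (R powr e) powr (1/t)"
    using K by (simp add: powr_mult)
  also have "\<dots> = K powr (1/t) * L * R powr (e / t)"
    using L assms(4) by (cases "L = 0") (simp_all add: powr_powr)
  finally show ?thesis unfolding K_def L_def e_def .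
qed

lemma gag_pow_matrix_finite:
  fixes S :: "(real^'n) set" and M :: "real^'n^'n"
  assumes "S \<in> sets lebesgue" "bounded S" "t > 0" "t * (1 - s) > 0"
  shows "gag_pow s t S (\<lambda>x. M *v x) < \<infinity>"
proof -
  obtain R where R: "S \<subseteq> ball 0 R" using assms(2) bounded_subset_ballD by blast
  obtain a b where "\<And>a' b'. \<bar>M$a'$b'\<bar> \<le> \<bar>M$a$b\<bar>" using ex_max_abs_entry by blast
  from gag_pow_matrix_le[OF assms(1) R assms(3,4) this] show ?thesis
    by (rule le_less_trans) simp
qed

lemma gag_pow_sub_affine_finite:
  fixes u :: "real^'n \<Rightarrow> real^'n"
  assumes S: "S \<in> sets lebesgue" "bounded S" and u: "u \<in> borel_measurable (lebesgue_on S)"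
    and p: "p > 0" "p * (1 - s) > 0" and fin: "gag_pow s p S u < \<infinity>"
  shows "gag_pow s p S (\<lambda>x. u x - (A *v x + b)) < \<infinity>"
proof -
  have "gag_pow s p S (\<lambda>x. u x - (A *v x + b)) = gag_pow s p S (\<lambda>x. u x + (- A) *v x)"
    by (rule gag_pow_cong) (simp add: uminus_matrix_vector_mult algebra_simps)
  also have "\<dots> \<le> ennreal (2 powr p) * (gag_pow s p S u + gag_pow s p S (\<lambda>x. (- A) *v x))"
    using measurable_matrix_vector_mult_lebesgue_on[OF S(1)] by (intro gag_pow_add_le[OF S(1) u _ p(1)])
  also have "\<dots> < \<infinity>"
    using fin gag_pow_matrix_finite[OF S p] by (simp add: ennreal_mult_less_top)
  finally show ?thesis .
qed

text \<open>Points \<open>x\<close>, \<open>y\<close> near the antipodes \<open>w \<plusminus> (r/2) e\<^sub>b\<close> of the inscribed ball have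
  \<open>x - y\<close> close to \<open>r e\<^sub>b\<close>, on which \<open>M\<close> is large in the direction of its largest entry.\<close>
lemma matrix_difference_quotient_ge:
  fixes M :: "real^'n^'n"
  assumes max: "\<And>a' b'. \<bar>M$a'$b'\<bar> \<le> \<bar>M$a$b\<bar>" and r: "r > 0" and s: "s \<ge> 0"
    and x: "x \<in> ball (w + (r/2) *\<^sub>R axis b 1) (r / (4 * CARD('n)))"
    and y: "y \<in> ball (w - (r/2) *\<^sub>R axis b 1) (r / (4 * CARD('n)))"
  shows "(\<bar>M$a$b\<bar> * r / 2)^2 / (2 * r) powr (real CARD('n) + 2 * s)
           \<le> norm (M *v x - M *v y)^2 / norm (x - y) powr (real CARD('n) + 2 * s)"
proof -
  define n where "n = real CARD('n)"
  have n: "n \<ge> 1" unfolding n_def by (simp add: Suc_leI)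
  define e :: "real^'n" where "e = axis b 1"
  define \<epsilon> where "\<epsilon> = (x - y) - r *\<^sub>R e"
  have \<epsilon>_split: "\<epsilon> = (x - (w + (r/2) *\<^sub>R e)) - (y - (w - (r/2) *\<^sub>R e))"
    unfolding \<epsilon>_def by (simp add: algebra_simps flip: scaleR_add_left)
  have "norm \<epsilon> \<le> norm (x - (w + (r/2) *\<^sub>R e)) + norm (y - (w - (r/2) *\<^sub>R e))"
    unfolding \<epsilon>_split by (rule norm_triangle_ineq4)
  also have "\<dots> < r / (4 * n) + r / (4 * n)"
    using x y unfolding e_def n_def by (simp add: dist_norm norm_minus_commute)
  finally have \<epsilon>: "norm \<epsilon> < r / (2 * n)" by simp
  have r2n: "r / (2 * n) \<le> r / 2" using n r by (intro divide_left_mono) auto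
  have xy: "x - y = r *\<^sub>R e + \<epsilon>" unfolding \<epsilon>_def by simp
  have "r = norm (r *\<^sub>R e)" using r by (simp add: e_def norm_axis_1)
  also have "\<dots> \<le> norm (x - y) + norm \<epsilon>" using norm_triangle_ineq4[of "x - y" \<epsilon>] by (simp add: xy)
  finally have xy_pos: "norm (x - y) > 0" using \<epsilon> r r2n by linarith
  have "norm (x - y) \<le> norm (r *\<^sub>R e) + norm \<epsilon>" unfolding xy by (rule norm_triangle_ineq)
  also have "\<dots> \<le> 2 * r" using \<epsilon> r r2n by (simp add: e_def norm_axis_1)
  finally have xy_le: "norm (x - y) \<le> 2 * r" .
  have "\<bar>M$a$b\<bar> * r / 2 \<le> norm (M *v x - M *v y)"
    using norm_matrix_vector_ge_max_entry[OF max, of r \<epsilon>] \<epsilon> r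
    by (simp add: xy e_def n_def matrix_vector_mult_diff_distrib[symmetric])
  then have "(\<bar>M$a$b\<bar> * r / 2)^2 / (2 * r) powr (n + 2 * s)
      \<le> norm (M *v x - M *v y)^2 / (2 * r) powr (n + 2 * s)"
    using r by (intro divide_right_mono power_mono) auto
  also have "\<dots> \<le> norm (M *v x - M *v y)^2 / norm (x - y) powr (n + 2 * s)"
    using xy_pos xy_le s n by (intro divide_left_mono powr_mono2 mult_pos_pos) auto
  finally show ?thesis unfolding n_def .
qed

definition matrix_energy_lower_const :: "nat \<Rightarrow> real \<Rightarrow> real" where
  "matrix_energy_lower_const d s =
     1/4 * 2 powr (- (real d + 2 * s)) * (unit_ball_vol (real d) * (1 / (4 * real d)) ^ d)^2"

lemma matrix_energy_lower_const_pos: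
  assumes "d > 0"
  shows "matrix_energy_lower_const d s > 0"
proof -
  have "unit_ball_vol (real d) * (1 / (4 * real d)) ^ d > 0" using assms by simp
  then show ?thesis unfolding matrix_energy_lower_const_def by (intro mult_pos_pos) auto
qed

lemma matrix_energy_lower_const_eq:
  assumes r: "r > 0"
  shows "(m * r / 2)^2 / (2 * r) powr (real d + 2 * s) * (unit_ball_vol (real d) * (r / (4 * real d)) ^ d)^2
           = matrix_energy_lower_const d s * m^2 * r powr (real d + 2 - 2 * s)"
proof -
  define n where "n = real d"
  have r_pow: "r ^ d = r powr n" unfolding n_def using r by (simp add: powr_realpow)
  have "(r powr n)^2 = r powr (2 * n)" by (simp add: power2_eq_square powr_add[symmetric])
  moreover have "r^2 = r powr 2" using r by (simp add: powr_realpow)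
  ultimately have r_pow2: "r^2 * (r powr n)^2 = r powr (n + 2 - 2 * s) * r powr (n + 2 * s)"
    by (simp add: powr_add[symmetric] add.commute)
  have "(m * r / 2)^2 / (2 * r) powr (n + 2 * s) * (unit_ball_vol n * (r / (4 * n)) ^ d)^2
      = m^2 * (unit_ball_vol n * (1 / (4 * n)) ^ d)^2 / 4
        * (r^2 * (r powr n)^2) / (2 powr (n + 2 * s) * r powr (n + 2 * s))"
    using r by (simp add: r_pow powr_mult power_mult_distrib power_divide mult_ac)
  also have "\<dots> = matrix_energy_lower_const d s * m^2 * r powr (n + 2 - 2 * s)"
    unfolding r_pow2 matrix_energy_lower_const_def n_def[symmetric] powr_minus_divide using r by simp
  finally show ?thesis unfolding n_def .
qed

lemma gag_pow_matrix_ge: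
  fixes S :: "(real^'n) set" and M :: "real^'n^'n"
  assumes S: "S \<in> sets lebesgue" and wr: "ball w r \<subseteq> S" and r: "r > 0" and s: "s \<ge> 0"
    and max: "\<And>a' b'. \<bar>M$a'$b'\<bar> \<le> \<bar>M$a$b\<bar>"
  shows "ennreal (matrix_energy_lower_const CARD('n) s * (M$a$b)^2 * r powr (real CARD('n) + 2 - 2 * s))
           \<le> gag_pow s 2 S (\<lambda>x. M *v x)"
proof -
  define n where "n = real CARD('n)"
  have n: "n \<ge> 1" unfolding n_def by (simp add: Suc_leI)
  define \<delta> where "\<delta> = r / (4 * n)"
  have \<delta>: "\<delta> > 0" "\<delta> \<le> r / 4" using r n unfolding \<delta>_def by (auto simp: field_simps intro: mult_left_mono)
  define B\<^sub>1 where "B\<^sub>1 = ball (w + (r/2) *\<^sub>R axis b 1) \<delta>"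
  define B\<^sub>2 where "B\<^sub>2 = ball (w - (r/2) *\<^sub>R axis b 1) \<delta>"
  have "B\<^sub>1 \<subseteq> ball w r" "B\<^sub>2 \<subseteq> ball w r"
    using \<delta> r unfolding B\<^sub>1_def B\<^sub>2_def by (subst ball_subset_ball_iff; simp add: dist_norm norm_axis_1)+
  then have B: "B\<^sub>1 \<subseteq> S" "B\<^sub>2 \<subseteq> S" using wr by blast+
  define V where "V = unit_ball_vol n * \<delta> ^ CARD('n)"
  have vol: "emeasure lebesgue (ball x \<delta>) = ennreal V" for x :: "real^'n"
    using \<delta> by (simp add: emeasure_completion emeasure_ball V_def n_def)
  define c where "c = (\<bar>M$a$b\<bar> * r / 2)^2 / (2 * r) powr (n + 2 * s)"
  have "ennreal (c * V^2) = ennreal c * emeasure lebesgue B\<^sub>1 * emeasure lebesgue B\<^sub>2"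
  proof -
    have "c \<ge> 0" "V \<ge> 0" using \<delta> n by (simp_all add: c_def V_def)
    then show ?thesis unfolding B\<^sub>1_def B\<^sub>2_def vol by (simp add: power2_eq_square ennreal_mult mult.assoc)
  qed
  also have "\<dots> \<le> (\<integral>\<^sup>+x. \<integral>\<^sup>+y. ennreal (norm (M *v x - M *v y)^2 / norm (x - y) powr (n + 2 * s))
            \<partial>lebesgue_on S \<partial>lebesgue_on S)"
    using S B
  proof (rule nn_integral_lebesgue_on_ge_rectangle)
    show "ennreal c \<le> ennreal (norm (M *v x - M *v y)^2 / norm (x - y) powr (n + 2 * s))"
      if "x \<in> B\<^sub>1" "y \<in> B\<^sub>2" for x y
      using that matrix_difference_quotient_ge[OF max r s]
      by (intro ennreal_leI) (simp add: c_def n_def B\<^sub>1_def B\<^sub>2_def \<delta>_def)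
  qed (auto simp: B\<^sub>1_def B\<^sub>2_def)
  also have "\<dots> = gag_pow s 2 S (\<lambda>x. M *v x)"
    unfolding gag_pow_def n_def by (simp add: mult.commute)
  finally have "ennreal (c * V^2) \<le> gag_pow s 2 S (\<lambda>x. M *v x)" .
  moreover have "c * V^2 = matrix_energy_lower_const CARD('n) s * (M$a$b)^2 * r powr (n + 2 - 2 * s)"
    using matrix_energy_lower_const_eq[OF r, where d = "CARD('n)" and m = "\<bar>M$a$b\<bar>" and s = s]
    unfolding c_def V_def \<delta>_def n_def by simp
  ultimately show ?thesis unfolding n_def by simp
qed

lemma gag_inner_Pimap_right:
  fixes F :: "real^'n::{finite,linorder} \<Rightarrow> real^'n::{finite,linorder}"
  assumes S: "S \<in> sets lebesgue" "bounded S" and F: "F \<in> borel_measurable (lebesgue_on S)"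
    and pq: "p > 1" "q > 1" "1/p + 1/q = 1" and s: "s < 1" and fin: "gag_pow s p S F < \<infinity>"
  shows "gag_inner s S F (Pimap c) = (\<Sum>(i, j) \<in> {(i, j). i < j}. c i j * gag_inner s S F (Ifun i j))"
proof -
  define P where "P = lebesgue_on S \<Otimes>\<^sub>M lebesgue_on S"
  have Ifun: "Ifun i j = (\<lambda>x. Imat i j *v x)" for i j by (simp add: fun_eq_iff Ifun_def)
  have int: "integrable P (gag_integrand s F (Ifun i j))" for i j
    unfolding P_def Ifun using pq s
    by (intro integrable_gag_integrand[OF S(1) F measurable_matrix_vector_mult_lebesgue_on[OF S(1)] pq fin]
        gag_pow_matrix_finite[OF S]) auto
  have "gag_integrand s F (Pimap c)
      = (\<lambda>z. \<Sum>ij \<in> {(i, j). i < j}. c (fst ij) (snd ij) * gag_integrand s F (Ifun (fst ij) (snd ij)) z)"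
    by (simp add: fun_eq_iff gag_integrand_def Pimap_def case_prod_unfold Ifun_def inner_sum_right
        sum_divide_distrib sum_subtractf[symmetric] inner_diff_right right_diff_distrib)
  then have "integral\<^sup>L P (gag_integrand s F (Pimap c))
      = (\<Sum>ij \<in> {(i, j). i < j}. integral\<^sup>L P (\<lambda>z. c (fst ij) (snd ij) * gag_integrand s F (Ifun (fst ij) (snd ij)) z))"
    by (simp only:) (intro Bochner_Integration.integral_sum integrable_mult_right int)
  then show ?thesis unfolding gag_inner_eq_integral P_def[symmetric] by (simp add: case_prod_unfold)
qed

text \<open>A skew-symmetric \<open>N\<close> is the combination \<open>\<Sum>i<j. N\<^sub>i\<^sub>j I\<^sub>i\<^sub>j\<close>, so orthogonality of \<open>V + N\<close>
  to every \<open>I\<^sub>i\<^sub>j\<close> gives \<open>\<langle>V + N, N\<rangle> = 0\<close>; Hoelder then bounds \<open>\<langle>N, N\<rangle> = -\<langle>V, N\<rangle>\<close>.\<close>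
lemma gag_inner_skew_self_le:
  fixes V :: "real^'n::{finite,linorder} \<Rightarrow> real^'n::{finite,linorder}"
    and N :: "real^'n::{finite,linorder}^'n::{finite,linorder}"
  assumes S: "S \<in> sets lebesgue" "bounded S"
    and V: "V \<in> borel_measurable (lebesgue_on S)" "gag_pow s p S V < \<infinity>"
    and pq: "p > 1" "q > 1" "1/p + 1/q = 1" and s: "s < 1"
    and N: "transpose N = - N"
    and orth: "\<And>i j. i < j \<Longrightarrow> gag_inner s S (\<lambda>x. V x + N *v x) (Ifun i j) = 0"
  shows "gag_inner s S (\<lambda>x. N *v x) (\<lambda>x. N *v x) \<le> gag_semi s p S V * gag_semi s q S (\<lambda>x. N *v x)"
proof -
  note N_meas = measurable_matrix_vector_mult_lebesgue_on[OF S(1), of N]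
  have N_fin: "gag_pow s p S (\<lambda>x. N *v x) < \<infinity>" "gag_pow s q S (\<lambda>x. N *v x) < \<infinity>"
    using pq s by (intro gag_pow_matrix_finite[OF S]; auto)+
  have VN_fin: "gag_pow s p S (\<lambda>x. V x + N *v x) < \<infinity>"
    using gag_pow_add_le[OF S(1) V(1) N_meas, of p s] V(2) N_fin pq
    by (auto simp: ennreal_mult_less_top intro: le_less_trans)
  have VN_meas: "(\<lambda>x. V x + N *v x) \<in> borel_measurable (lebesgue_on S)"
    using V(1) N_meas by measurable
  have Pimap_N: "Pimap (\<lambda>i j. N$i$j) = (\<lambda>x. N *v x)"
    by (simp add: fun_eq_iff Pimap_eq_Pimat skew_eq_Pimat[OF N, symmetric])
  have "gag_inner s S (\<lambda>x. V x + N *v x) (\<lambda>x. N *v x)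
      = (\<Sum>(i, j) \<in> {(i, j). i < j}. N$i$j * gag_inner s S (\<lambda>x. V x + N *v x) (Ifun i j))"
    using gag_inner_Pimap_right[OF S VN_meas pq s VN_fin, of "\<lambda>i j. N$i$j"] by (simp only: Pimap_N)
  also have "\<dots> = 0" using orth by (intro sum.neutral) auto
  finally have "gag_inner s S V (\<lambda>x. N *v x) + gag_inner s S (\<lambda>x. N *v x) (\<lambda>x. N *v x) = 0"
    using gag_inner_add_left[OF S(1) V(1) N_meas N_meas pq V(2) N_fin] by simp
  moreover have "\<bar>gag_inner s S V (\<lambda>x. N *v x)\<bar> \<le> gag_semi s p S V * gag_semi s q S (\<lambda>x. N *v x)"
    by (rule abs_gag_inner_le[OF S(1) V(1) N_meas pq V(2) N_fin(2)])
  ultimately show ?thesis by linarith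
qed

lemma radius_le_of_nested_balls:
  fixes w z :: "'a::euclidean_space"
  assumes "ball w r \<subseteq> S" "S \<subseteq> ball z R" "0 < r"
  shows "r \<le> R"
proof -
  have "ball w r \<subseteq> ball z R" using assms(1,2) by blast
  then have "dist w z + r \<le> R" using assms(3) by (auto simp: ball_subset_ball_iff)
  then show ?thesis using zero_le_dist[of w z] by linarith
qed

lemma skew_matrix_max_entry_le:
  fixes V :: "real^'n::{finite,linorder} \<Rightarrow> real^'n::{finite,linorder}"
    and N :: "real^'n::{finite,linorder}^'n::{finite,linorder}"
  assumes \<Omega>: "\<Omega> \<in> sets lebesgue" and wr: "ball w r \<subseteq> \<Omega>" and zR: "\<Omega> \<subseteq> ball z R" and r: "r > 0"
    and V: "V \<in> borel_measurable (lebesgue_on \<Omega>)" "gag_pow s p \<Omega> V < \<infinity>"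
    and pq: "p > 1" "q > 1" "1/p + 1/q = 1" and s: "0 \<le> s" "s < 1"
    and N: "transpose N = - N"
    and orth: "\<And>i j. i < j \<Longrightarrow> gag_inner s \<Omega> (\<lambda>x. V x + N *v x) (Ifun i j) = 0"
    and max: "\<And>a' b'. \<bar>N$a'$b'\<bar> \<le> \<bar>N$a$b\<bar>"
  shows "matrix_energy_lower_const CARD('n) s * \<bar>N$a$b\<bar> * r powr (real CARD('n) + 2 - 2 * s)
           \<le> lipschitz_energy_const CARD('n) q s powr (1/q) * real CARD('n)^2
               * R powr ((real CARD('n) + q * (1 - s)) / q) * gag_semi s p \<Omega> V"
proof -
  define K where "K = matrix_energy_lower_const CARD('n) s"
  define L where "L = lipschitz_energy_const CARD('n) q s powr (1/q) * real CARD('n)^2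
                      * R powr ((real CARD('n) + q * (1 - s)) / q)"
  define m where "m = \<bar>N$a$b\<bar>"
  define k where "k = real CARD('n) + 2 - 2 * s"
  have R: "R > 0" using radius_le_of_nested_balls[OF wr zR r] r by linarith
  have bounded: "bounded \<Omega>" using zR bounded_ball bounded_subset by blast
  note N_meas = measurable_matrix_vector_mult_lebesgue_on[OF \<Omega>, of N]
  have K: "K > 0" unfolding K_def by (rule matrix_energy_lower_const_pos) simp
  have "ennreal (K * m^2 * r powr k) \<le> gag_pow s 2 \<Omega> (\<lambda>x. N *v x)"
    unfolding K_def m_def k_def using gag_pow_matrix_ge[OF \<Omega> wr r s(1) max] by simp
  then have "enn2real (ennreal (K * m^2 * r powr k)) \<le> enn2real (gag_pow s 2 \<Omega> (\<lambda>x. N *v x))"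
    using gag_pow_matrix_finite[OF \<Omega> bounded, of 2 s N] s by (intro enn2real_mono) auto
  then have "K * m^2 * r powr k \<le> gag_inner s \<Omega> (\<lambda>x. N *v x) (\<lambda>x. N *v x)"
    unfolding gag_inner_self[OF \<Omega> N_meas] using K by simp
  also have "\<dots> \<le> gag_semi s p \<Omega> V * gag_semi s q \<Omega> (\<lambda>x. N *v x)"
    by (rule gag_inner_skew_self_le[OF \<Omega> bounded V pq s(2) N orth])
  also have "\<dots> \<le> gag_semi s p \<Omega> V * (L * m)"
    unfolding L_def m_def using gag_semi_matrix_le[OF \<Omega> zR R _ _ max, of q] pq s
    by (intro mult_left_mono) (auto simp: gag_semi_def mult_ac)
  finally have "m * (K * m * r powr k) \<le> m * (L * gag_semi s p \<Omega> V)"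
    by (simp add: power2_eq_square mult_ac)
  moreover have "L * gag_semi s p \<Omega> V \<ge> 0"
    unfolding L_def gag_semi_def by (intro mult_nonneg_nonneg) auto
  ultimately have "K * m * r powr k \<le> L * gag_semi s p \<Omega> V"
    by (cases "m = 0") (simp_all add: m_def)
  then show ?thesis unfolding K_def L_def m_def k_def by (simp add: mult_ac)
qed

definition korn_const :: "nat \<Rightarrow> real \<Rightarrow> real \<Rightarrow> real" where
  "korn_const d p s =
     4 * (1 + lipschitz_energy_const d p s powr (1/p) * real d ^ 2
              * (lipschitz_energy_const d (p / (p - 1)) s powr (1 / (p / (p - 1))) * real d ^ 2)
              / matrix_energy_lower_const d s)"

lemma gag_semi_sub_Pimap_le:
  fixes u :: "real^'n::{finite,linorder} \<Rightarrow> real^'n::{finite,linorder}"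
    and A :: "real^'n::{finite,linorder}^'n::{finite,linorder}"
  assumes p: "1 < p" and s: "0 \<le> s" "s < 1"
    and \<Omega>: "\<Omega> \<in> sets lebesgue" and wr: "ball w r \<subseteq> \<Omega>" and zR: "\<Omega> \<subseteq> ball z R" and r: "0 < r"
    and u: "u \<in> Wsp s p \<Omega>"
    and orth: "\<And>i j. i < j \<Longrightarrow> gag_inner s \<Omega> (\<lambda>x. u x - Pimap c x) (Ifun i j) = 0"
    and A: "transpose A = - A"
  shows "gag_semi s p \<Omega> (\<lambda>x. u x - Pimap c x)
           \<le> korn_const CARD('n) p s * (R / r) powr (real CARD('n) + 2 - 2 * s)
               * gag_semi s p \<Omega> (\<lambda>x. u x - (A *v x + b))"
proof -
  define q where "q = p / (p - 1)"
  have pq: "q > 1" "1/p + 1/q = 1" unfolding q_def using p by (simp_all add: field_simps)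
  define n where "n = real CARD('n)"
  define N where "N = A - Pimat c"
  define V where "V = (\<lambda>x. u x - (A *v x + b))"
  have rR: "r \<le> R" by (rule radius_le_of_nested_balls[OF wr zR r])
  have bounded: "bounded \<Omega>" using zR bounded_ball bounded_subset by blast
  have u_meas: "u \<in> borel_measurable (lebesgue_on \<Omega>)" and u_fin: "gag_pow s p \<Omega> u < \<infinity>"
    using u unfolding Wsp_def by auto
  note N_meas = measurable_matrix_vector_mult_lebesgue_on[OF \<Omega>, of N]
  have V_meas: "V \<in> borel_measurable (lebesgue_on \<Omega>)"
    unfolding V_def using u_meas measurable_matrix_vector_mult_lebesgue_on[OF \<Omega>, of A] by measurable
  have V_fin: "gag_pow s p \<Omega> V < \<infinity>"
    unfolding V_def using p s by (intro gag_pow_sub_affine_finite[OF \<Omega> bounded u_meas _ _ u_fin]) auto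
  have N_skew: "transpose N = - N" unfolding N_def transpose_diff A transpose_Pimat by simp
  have diff: "(u x - Pimap c x) - (u y - Pimap c y) = (V x + N *v x) - (V y + N *v y)" for x y
    by (simp add: V_def N_def Pimap_eq_Pimat matrix_vector_mult_diff_rdistrib algebra_simps)
  obtain a\<^sub>0 b\<^sub>0 where max: "\<And>a b. \<bar>N$a$b\<bar> \<le> \<bar>N$a\<^sub>0$b\<^sub>0\<bar>" using ex_max_abs_entry by blast
  have orth_VN: "gag_inner s \<Omega> (\<lambda>x. V x + N *v x) (Ifun i j) = 0" if "i < j" for i j
    using orth[OF that] gag_inner_cong[of \<Omega> "\<lambda>x. u x - Pimap c x" "\<lambda>x. V x + N *v x"] diff by simp
  define K where "K = matrix_energy_lower_const CARD('n) s"
  define L\<^sub>p where "L\<^sub>p = lipschitz_energy_const CARD('n) p s powr (1/p) * n^2"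
  define L\<^sub>q where "L\<^sub>q = lipschitz_energy_const CARD('n) q s powr (1/q) * n^2"
  have entry: "K * \<bar>N$a\<^sub>0$b\<^sub>0\<bar> * r powr (n + 2 - 2 * s)
      \<le> L\<^sub>q * R powr ((n + q * (1 - s)) / q) * gag_semi s p \<Omega> V"
    using skew_matrix_max_entry_le[OF \<Omega> wr zR r V_meas V_fin p pq s N_skew orth_VN max]
    unfolding K_def L\<^sub>q_def n_def .
  have "gag_semi s p \<Omega> (\<lambda>x. u x - Pimap c x) = gag_semi s p \<Omega> (\<lambda>x. V x + N *v x)"
    unfolding gag_semi_def by (subst gag_pow_cong[OF diff]) (rule refl)
  also have "\<dots> \<le> 4 * (gag_semi s p \<Omega> V + gag_semi s p \<Omega> (\<lambda>x. N *v x))"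
    using p s
    by (intro gag_semi_add_le[OF \<Omega> V_meas N_meas _ V_fin gag_pow_matrix_finite[OF \<Omega> bounded]]) auto
  also have "\<dots> \<le> 4 * (gag_semi s p \<Omega> V + L\<^sub>p * \<bar>N$a\<^sub>0$b\<^sub>0\<bar> * R powr ((n + p * (1 - s)) / p))"
    using gag_semi_matrix_le[OF \<Omega> zR _ _ _ max, of p] p s rR r unfolding L\<^sub>p_def n_def by (simp add: mult_ac)
  also have "\<dots> \<le> 4 * ((1 + L\<^sub>p * L\<^sub>q / K) * (R / r) powr (n + 2 - 2 * s) * gag_semi s p \<Omega> V)"
  proof -
    have K: "K > 0" unfolding K_def by (rule matrix_energy_lower_const_pos) simp
    have L\<^sub>p: "L\<^sub>p \<ge> 0" and g: "gag_semi s p \<Omega> V \<ge> 0" by (simp_all add: L\<^sub>p_def gag_semi_def)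
    have k: "(n + p * (1 - s)) / p + (n + q * (1 - s)) / q = n + 2 - 2 * s" "n + 2 - 2 * s \<ge> 0"
      using p pq s by (auto simp: n_def intro: conjugate_exponents_sum)
    show ?thesis using add_entry_term_le_powr_ratio[OF K L\<^sub>p g r rR k entry] by simp
  qed
  also have "\<dots> = korn_const CARD('n) p s * (R / r) powr (n + 2 - 2 * s) * gag_semi s p \<Omega> V"
    unfolding korn_const_def K_def L\<^sub>p_def L\<^sub>q_def q_def n_def by (simp add: mult_ac)
  finally show ?thesis unfolding n_def V_def .
qed

theorem proposition4p4:
  fixes p s :: real
  assumes "1 < p" and "0 < s" and "s < 1"
  shows "\<exists>C. \<forall>(\<Omega> :: (real^'n::{finite,linorder}) set) w r z R u c rr.
           open \<Omega> \<and> connected \<Omega> \<and> bounded \<Omega> \<and> 0 < r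
           \<and> ball w r \<subseteq> \<Omega> \<and> \<Omega> \<subseteq> ball z R
           \<and> u \<in> Wsp s p \<Omega>
           \<and> (\<forall>i j. i < j \<longrightarrow> gag_inner s \<Omega> (\<lambda>x. u x - Pimap c x) (Ifun i j) = 0)
           \<and> rr \<in> RM
           \<longrightarrow> gag_semi s p \<Omega> (\<lambda>x. u x - Pimap c x)
                 \<le> C * (R / r) powr (real CARD('n) + 2 - 2 * s) * gag_semi s p \<Omega> (\<lambda>x. u x - rr x)"
proof (intro exI[of _ "korn_const CARD('n) p s"] allI impI)
  fix \<Omega> :: "(real^'n::{finite,linorder}) set" and w z :: "real^'n::{finite,linorder}" and r R :: real
    and u rr :: "real^'n::{finite,linorder} \<Rightarrow> real^'n::{finite,linorder}"
    and c :: "'n::{finite,linorder} \<Rightarrow> 'n::{finite,linorder} \<Rightarrow> real"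
  assume H: "open \<Omega> \<and> connected \<Omega> \<and> bounded \<Omega> \<and> 0 < r
           \<and> ball w r \<subseteq> \<Omega> \<and> \<Omega> \<subseteq> ball z R
           \<and> u \<in> Wsp s p \<Omega>
           \<and> (\<forall>i j. i < j \<longrightarrow> gag_inner s \<Omega> (\<lambda>x. u x - Pimap c x) (Ifun i j) = 0)
           \<and> rr \<in> RM"
  then obtain A b where rr: "rr = (\<lambda>x. A *v x + b)" and A: "transpose A = - A"
    unfolding RM_def by blast
  have "\<Omega> \<in> sets lebesgue" using H by auto
  with H A assms show "gag_semi s p \<Omega> (\<lambda>x. u x - Pimap c x)
      \<le> korn_const CARD('n) p s * (R / r) powr (real CARD('n) + 2 - 2 * s) * gag_semi s p \<Omega> (\<lambda>x. u x - rr x)"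
    unfolding rr by (intro gag_semi_sub_Pimap_le) auto
qed

end
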